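(* Let $\omega>0$ be fixed and, for a time step $\tau>0$, set $\sigma=\sigma(\tau)=\omega\sqrt{\tau}$. Let $w:\mathbb{R}\to\mathbb{R}$ (the weighting function, depending on fixed parameters $\bm\theta$) be continuous and bounded away from zero, i.e. there exist constants $L,U$ with $0<L\le w(x)\le U$ for all $x\in\mathbb{R}$, and let $w$ be twice differentiable with bounded second derivative. For $x,y\in\mathbb{R}$ and $s>0$ define $$p_1(x\mid y,s,\bm\theta)=\frac{k_s(x;y)\,w(x)}{\int_{\mathbb{R}}k_s(z;y)\,w(z)\,\mathrm{d}z},\qquad p_2(x\mid y,s,\bm\theta)=\int_{\mathbb{R}}p_1(x\mid z,s,\bm\theta)\,p_1(z\mid y,s,\bm\theta)\,\mathrm{d}z,$$ where $k_s(\cdot;y)$ is the Gaussian density with mean $y$ and standard deviation $s$. Then the model is asymptotically robust of degree 2 with parameter transformation $g_2(\sigma,\bm\theta)=(\sqrt2\,\sigma,\bm\theta)$: writing $$p_2(x\mid y,\sigma(\tau),\bm\theta)=p_1(x\mid y,\sqrt2\,\sigma(\tau),\bm\theta)\,v(x,y;\tau),$$ there is a constant $C>0$ such that $|v(x,y;\tau)-1|\le C\tau$ for all $x,y\in\mathbb{R}$ and all $\tau>0$.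
   Context: The setting is a one-dimensional discrete-time Markov movement model with time step $\tau$, whose one-step transition density is a Gaussian movement kernel (standard deviation $\sigma(\tau)=\omega\sqrt\tau$) multiplied by a positive weighting function and renormalized. Asymptotic robustness of degree $n$ means: there is an injective parameter map $g_n$ and a function $v(x,y;\tau)>0$ with $v-1=\mathcal{O}(\tau)$ uniformly on $\mathbb{R}^2\times(0,\infty)$ such that $p_n(x\mid y,\bm\theta)=p_1(x\mid y,g_n(\bm\theta))\,v(x,y;\tau)$. *)

theory Defs
  imports "HOL-Probability.Probability"
begin

definition p1 :: "(real \<Rightarrow> real) \<Rightarrow> real \<Rightarrow> real \<Rightarrow> real \<Rightarrow> real" where
  "p1 w s x y =
     normal_density y s x * w x / (\<integral>z. normal_density y s z * w z \<partial>lborel)"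

definition p2 :: "(real \<Rightarrow> real) \<Rightarrow> real \<Rightarrow> real \<Rightarrow> real \<Rightarrow> real" where
  "p2 w s x y = (\<integral>z. p1 w s x z * p1 w s z y \<partial>lborel)"

end

theory Submission
  imports Defs
begin

text \<open>Write \<open>W\<^sub>s(y) = \<integral> k\<^sub>s(z; y) w(z) dz\<close> for the normaliser of \<open>p1\<close>. Completing the
  square gives \<open>k\<^sub>s(x; z) k\<^sub>s(z; y) = k\<^sub>\<surd>\<^sub>2\<^sub>s(x; y) k\<^sub>s\<^sub>/\<^sub>\<surd>\<^sub>2(z; (x + y)/2)\<close>, so the ratio
  \<open>p2 / p1\<close> (the latter at width \<open>\<surd>2 s\<close>) is the Gaussian average of \<open>w / W\<^sub>s\<close> times
  \<open>W\<^sub>\<surd>\<^sub>2\<^sub>s(y) / W\<^sub>s(y)\<close>. Expanding \<open>w\<close> to second order around \<open>y\<close>, the linear term has Gaussian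
  mean zero, hence \<open>|W\<^sub>s(y) - w(y)| \<le> M s\<^sup>2 / 2\<close>. Since \<open>W\<^sub>s \<ge> L\<close>, both factors are
  \<open>1 + O(s\<^sup>2)\<close> uniformly in \<open>x, y\<close>, and \<open>s\<^sup>2 = \<omega>\<^sup>2 \<tau>\<close>.\<close>

definition gaussian_smoothing :: "(real \<Rightarrow> real) \<Rightarrow> real \<Rightarrow> real \<Rightarrow> real" where
  "gaussian_smoothing w s y = (\<integral>z. normal_density y s z * w z \<partial>lborel)"

lemma p1_eq_gaussian_smoothing:
  "p1 w s x y = normal_density y s x * w x / gaussian_smoothing w s y"
  unfolding p1_def gaussian_smoothing_def ..

lemma taylor2_remainder_bound:
  fixes f f' f'' :: "real \<Rightarrow> real"
  assumes f': "\<And>x. (f has_real_derivative f' x) (at x)"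
    and f'': "\<And>x. (f' has_real_derivative f'' x) (at x)"
    and bound: "\<And>x. \<bar>f'' x\<bar> \<le> M"
  shows "\<bar>f b - f a - f' a * (b - a)\<bar> \<le> M / 2 * (b - a)\<^sup>2"
proof (cases "b = a")
  case True
  then show ?thesis by simp
next
  case False
  define diff where "diff = (\<lambda>n::nat. if n = 0 then f else if n = 1 then f' else f'')"
  have "\<exists>t. (if b < a then b < t \<and> t < a else a < t \<and> t < b) \<and>
      f b = (\<Sum>m<2. diff m a / fact m * (b - a) ^ m) + diff 2 t / fact 2 * (b - a) ^ 2"
    by (rule Taylor[where a = "min a b" and b = "max a b"])
      (use False f' f'' in \<open>auto simp: diff_def less_2_cases_iff\<close>)
  then obtain t where "f b = (\<Sum>m<2. diff m a / fact m * (b - a) ^ m) + diff 2 t / fact 2 * (b - a) ^ 2"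
    by blast
  then have "f b - f a - f' a * (b - a) = f'' t / 2 * (b - a)\<^sup>2"
    by (simp add: diff_def numeral_2_eq_2)
  also have "\<bar>\<dots>\<bar> \<le> M / 2 * (b - a)\<^sup>2"
    using bound[of t] by (simp add: abs_mult mult_right_mono)
  finally show ?thesis .
qed

lemma normal_density_mult_normal_density:
  assumes "s > 0"
  shows "normal_density z s x * normal_density y s z =
    normal_density y (sqrt 2 * s) x * normal_density ((x + y) / 2) (s / sqrt 2) z"
proof -
  have exponents: "-(x - z)\<^sup>2 / (2 * s\<^sup>2) + -(z - y)\<^sup>2 / (2 * s\<^sup>2) =
      -(x - y)\<^sup>2 / (2 * (sqrt 2 * s)\<^sup>2) + -(z - (x + y) / 2)\<^sup>2 / (2 * (s / sqrt 2)\<^sup>2)"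
    using assms by (simp add: power_mult_distrib power_divide field_simps power2_eq_square)
  have "sqrt (2 * pi * (sqrt 2 * s)\<^sup>2) * sqrt (2 * pi * (s / sqrt 2)\<^sup>2) =
      sqrt (2 * pi * s\<^sup>2) * sqrt (2 * pi * s\<^sup>2)"
    unfolding real_sqrt_mult[symmetric] by (simp add: power_mult_distrib power_divide)
  then have constants: "1 / sqrt (2 * pi * s\<^sup>2) * (1 / sqrt (2 * pi * s\<^sup>2)) =
      1 / sqrt (2 * pi * (sqrt 2 * s)\<^sup>2) * (1 / sqrt (2 * pi * (s / sqrt 2)\<^sup>2))"
    by (simp add: field_simps)
  have "normal_density z s x * normal_density y s z =
      (1 / sqrt (2 * pi * s\<^sup>2) * (1 / sqrt (2 * pi * s\<^sup>2))) *
      exp (-(x - z)\<^sup>2 / (2 * s\<^sup>2) + -(z - y)\<^sup>2 / (2 * s\<^sup>2))"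
    unfolding normal_density_def exp_add by (simp add: power2_commute[of z x])
  also have "\<dots> = normal_density y (sqrt 2 * s) x * normal_density ((x + y) / 2) (s / sqrt 2) z"
    unfolding constants exponents normal_density_def exp_add by (simp only: mult_ac)
  finally show ?thesis .
qed

lemma
  fixes f :: "real \<Rightarrow> real"
  assumes s: "s > 0" and f: "f \<in> borel_measurable borel"
    and lower: "\<And>z. a \<le> f z" and upper: "\<And>z. f z \<le> b"
  shows integrable_normal_density_mult_bounded: "integrable lborel (\<lambda>z. normal_density m s z * f z)"
    and gaussian_smoothing_lower_bound: "a \<le> gaussian_smoothing f s m"
    and gaussian_smoothing_upper_bound: "gaussian_smoothing f s m \<le> b"
proof -
  show int: "integrable lborel (\<lambda>z. normal_density m s z * f z)"
  proof (rule Bochner_Integration.integrable_bound)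
    show "integrable lborel (\<lambda>z. normal_density m s z * (\<bar>a\<bar> + \<bar>b\<bar>))"
      using s by simp
    show "(\<lambda>z. normal_density m s z * f z) \<in> borel_measurable lborel"
      using f by measurable
    have "\<bar>f z\<bar> \<le> \<bar>a\<bar> + \<bar>b\<bar>" for z
      using lower[of z] upper[of z] by linarith
    then show "AE z in lborel. norm (normal_density m s z * f z) \<le>
        norm (normal_density m s z * (\<bar>a\<bar> + \<bar>b\<bar>))"
      by (simp add: abs_mult mult_left_mono)
  qed
  have "(\<integral>z. normal_density m s z * a \<partial>lborel) \<le> gaussian_smoothing f s m"
    unfolding gaussian_smoothing_def
    by (rule integral_mono) (use int lower s in \<open>auto intro: mult_left_mono\<close>)
  then show "a \<le> gaussian_smoothing f s m"
    using s by simp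
  have "gaussian_smoothing f s m \<le> (\<integral>z. normal_density m s z * b \<partial>lborel)"
    unfolding gaussian_smoothing_def
    by (rule integral_mono) (use int upper s in \<open>auto intro: mult_left_mono\<close>)
  then show "gaussian_smoothing f s m \<le> b"
    using s by simp
qed

lemma gaussian_smoothing_measurable [measurable]:
  assumes "w \<in> borel_measurable borel"
  shows "gaussian_smoothing w s \<in> borel_measurable borel"
proof -
  have "gaussian_smoothing w s \<in> borel_measurable lborel"
    unfolding gaussian_smoothing_def[abs_def] normal_density_def using assms by measurable
  then show ?thesis
    by simp
qed

lemma gaussian_smoothing_taylor_bound:
  fixes w w' w'' :: "real \<Rightarrow> real"
  assumes s: "s > 0" and w: "w \<in> borel_measurable borel"
    and lower: "\<And>x. L \<le> w x" and upper: "\<And>x. w x \<le> U"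
    and w': "\<And>x. (w has_real_derivative w' x) (at x)"
    and w'': "\<And>x. (w' has_real_derivative w'' x) (at x)"
    and bound: "\<And>x. \<bar>w'' x\<bar> \<le> M"
  shows "\<bar>gaussian_smoothing w s y - w y\<bar> \<le> M / 2 * s\<^sup>2"
proof -
  let ?N = "normal_density y s"
  define remainder where "remainder z = ?N z * w z - w y * ?N z - w' y * (?N z * (z - y))" for z
  have int_w: "integrable lborel (\<lambda>z. ?N z * w z)"
    by (rule integrable_normal_density_mult_bounded[OF s w lower upper])
  have int_1: "integrable lborel (\<lambda>z. ?N z * (z - y))"
    using integrable_normal_moment[OF s, of y 1] by simp
  have int_2: "integrable lborel (\<lambda>z. ?N z * (z - y)\<^sup>2)"
    using integrable_normal_moment[OF s, of y 2] by simp
  have mean: "(\<integral>z. ?N z * (z - y) \<partial>lborel) = 0"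
    using integral_normal_moment_odd[OF s, of y 0] by simp
  have variance: "(\<integral>z. ?N z * (z - y)\<^sup>2 \<partial>lborel) = s\<^sup>2"
    using integral_normal_moment_even[OF s, of y 1] by simp
  have int_remainder: "integrable lborel remainder"
    unfolding remainder_def using int_w int_1 s
    by (intro Bochner_Integration.integrable_diff integrable_mult_right) auto
  have "gaussian_smoothing w s y - w y = (\<integral>z. remainder z \<partial>lborel)"
    unfolding remainder_def gaussian_smoothing_def using int_w int_1 mean s
    by (subst Bochner_Integration.integral_diff;
        (intro Bochner_Integration.integrable_diff integrable_mult_right)?; auto)+
  also have "\<bar>\<dots>\<bar> \<le> (\<integral>z. \<bar>remainder z\<bar> \<partial>lborel)"
    by (rule integral_abs_bound)
  also have "\<dots> \<le> (\<integral>z. M / 2 * (?N z * (z - y)\<^sup>2) \<partial>lborel)"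
  proof (rule integral_mono)
    show "integrable lborel (\<lambda>z. \<bar>remainder z\<bar>)"
      using int_remainder by auto
    show "integrable lborel (\<lambda>z. M / 2 * (?N z * (z - y)\<^sup>2))"
      using int_2 by auto
    fix z
    have "remainder z = ?N z * (w z - w y - w' y * (z - y))"
      unfolding remainder_def by (simp add: algebra_simps)
    then have "\<bar>remainder z\<bar> = ?N z * \<bar>w z - w y - w' y * (z - y)\<bar>"
      by (simp add: abs_mult)
    also have "\<dots> \<le> ?N z * (M / 2 * (z - y)\<^sup>2)"
      by (rule mult_left_mono[OF taylor2_remainder_bound[OF w' w'' bound]]) simp
    finally show "\<bar>remainder z\<bar> \<le> M / 2 * (?N z * (z - y)\<^sup>2)"
      by (simp add: algebra_simps)
  qed
  also have "\<dots> = M / 2 * s\<^sup>2"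
    using variance by simp
  finally show ?thesis .
qed

lemma abs_divide_minus_one_le:
  fixes a b L :: real
  assumes "0 < L" "L \<le> b"
  shows "\<bar>a / b - 1\<bar> \<le> \<bar>a - b\<bar> / L"
proof -
  have "a / b - 1 = (a - b) / b"
    using assms by (simp add: field_simps)
  then have "\<bar>a / b - 1\<bar> = \<bar>a - b\<bar> / b"
    using assms by simp
  also have "\<dots> \<le> \<bar>a - b\<bar> / L"
    using assms by (intro divide_left_mono) auto
  finally show ?thesis .
qed

lemma abs_mult_minus_one_le:
  fixes r q e d K :: real
  assumes "\<bar>r - 1\<bar> \<le> e" "0 \<le> q" "q \<le> K" "\<bar>q - 1\<bar> \<le> d"
  shows "\<bar>r * q - 1\<bar> \<le> e * K + d"
proof -
  have "r * q - 1 = (r - 1) * q + (q - 1)"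
    by (simp add: algebra_simps)
  moreover have "\<bar>(r - 1) * q\<bar> \<le> e * K"
    using assms by (simp add: abs_mult) (metis abs_ge_zero mult_mono order_trans)
  ultimately show ?thesis
    using assms by linarith
qed

lemma p2_divide_p1_factorization:
  fixes w :: "real \<Rightarrow> real"
  assumes s: "s > 0" and w: "w \<in> borel_measurable borel"
    and L: "0 < L" and lower: "\<And>x. L \<le> w x" and upper: "\<And>x. w x \<le> U"
  shows "p2 w s x y / p1 w (sqrt 2 * s) x y =
    gaussian_smoothing (\<lambda>z. w z / gaussian_smoothing w s z) (s / sqrt 2) ((x + y) / 2) *
    (gaussian_smoothing w (sqrt 2 * s) y / gaussian_smoothing w s y)"
proof -
  let ?W = "gaussian_smoothing w"
  have W_pos: "?W t z > 0" if "t > 0" for t z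
    using gaussian_smoothing_lower_bound[OF that w lower upper, where m = z] L by linarith
  define K where "K = normal_density y (sqrt 2 * s) x"
  have "K > 0"
    unfolding K_def using s by (simp add: normal_density_pos)
  define R where "R = gaussian_smoothing (\<lambda>z. w z / ?W s z) (s / sqrt 2) ((x + y) / 2)"
  have "p2 w s x y = (\<integral>z. w x / ?W s y * K *
      (normal_density ((x + y) / 2) (s / sqrt 2) z * (w z / ?W s z)) \<partial>lborel)"
    unfolding p2_def p1_eq_gaussian_smoothing
  proof (rule Bochner_Integration.integral_cong[OF refl])
    fix z
    have "normal_density z s x * w x / ?W s z * (normal_density y s z * w z / ?W s y) =
        (normal_density z s x * normal_density y s z) * (w x / ?W s y) * (w z / ?W s z)"
      (is "?integrand = _") by (simp add: field_simps)
    also have "\<dots> = w x / ?W s y * K * (normal_density ((x + y) / 2) (s / sqrt 2) z * (w z / ?W s z))"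
      unfolding normal_density_mult_normal_density[OF s] K_def by (simp add: algebra_simps)
    finally show "?integrand = \<dots>" .
  qed
  also have "\<dots> = w x / ?W s y * K * gaussian_smoothing (\<lambda>z. w z / ?W s z) (s / sqrt 2) ((x + y) / 2)"
    unfolding gaussian_smoothing_def by (rule integral_mult_right_zero)
  finally have p2_eq: "p2 w s x y = w x / ?W s y * K * R"
    unfolding R_def .
  have p1_eq: "p1 w (sqrt 2 * s) x y = K * w x / ?W (sqrt 2 * s) y"
    unfolding p1_eq_gaussian_smoothing K_def ..
  have "w x > 0" "?W s y > 0" "?W (sqrt 2 * s) y > 0"
    using lower[of x] L W_pos s by auto
  then show ?thesis
    unfolding R_def[symmetric] p2_eq p1_eq using \<open>K > 0\<close> by (simp add: field_simps)
qed

lemma p2_divide_p1_deviation: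
  fixes w w' w'' :: "real \<Rightarrow> real"
  assumes s: "s > 0" and w: "w \<in> borel_measurable borel"
    and L: "0 < L" and lower: "\<And>x. L \<le> w x" and upper: "\<And>x. w x \<le> U"
    and w': "\<And>x. (w has_real_derivative w' x) (at x)"
    and w'': "\<And>x. (w' has_real_derivative w'' x) (at x)"
    and bound: "\<And>x. \<bar>w'' x\<bar> \<le> M"
  shows "\<bar>p2 w s x y / p1 w (sqrt 2 * s) x y - 1\<bar> \<le> (M / (2 * L) * (U / L) + 3 * M / (2 * L)) * s\<^sup>2"
proof -
  let ?W = "gaussian_smoothing w"
  have s': "sqrt 2 * s > 0" "s / sqrt 2 > 0"
    using s by auto
  have W_lower: "L \<le> ?W t z" if "t > 0" for t z
    by (rule gaussian_smoothing_lower_bound[OF that w lower upper])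
  have W_upper: "?W t z \<le> U" if "t > 0" for t z
    by (rule gaussian_smoothing_upper_bound[OF that w lower upper])
  have W_taylor: "\<bar>?W t z - w z\<bar> \<le> M / 2 * t\<^sup>2" if "t > 0" for t z
    by (rule gaussian_smoothing_taylor_bound[OF that w lower upper w' w'' bound])
  define e where "e = M / (2 * L) * s\<^sup>2"
  define r where "r = gaussian_smoothing (\<lambda>z. w z / ?W s z) (s / sqrt 2) ((x + y) / 2)"
  define q where "q = ?W (sqrt 2 * s) y / ?W s y"
  have "\<bar>w z / ?W s z - 1\<bar> \<le> e" for z
  proof -
    have "\<bar>w z / ?W s z - 1\<bar> \<le> \<bar>?W s z - w z\<bar> / L"
      using abs_divide_minus_one_le[OF L W_lower[OF s]] by (simp add: abs_minus_commute)
    also have "\<dots> \<le> e"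
      unfolding e_def using W_taylor[OF s, of z] L by (simp add: field_simps)
    finally show ?thesis .
  qed
  then have ratio_lower: "1 - e \<le> w z / ?W s z" and ratio_upper: "w z / ?W s z \<le> 1 + e" for z
    unfolding abs_le_iff by (simp_all add: algebra_simps)
  have ratio_measurable: "(\<lambda>z. w z / ?W s z) \<in> borel_measurable borel"
    using w by measurable
  have "1 - e \<le> r" "r \<le> 1 + e"
    unfolding r_def
    by (rule gaussian_smoothing_lower_bound[OF s'(2) ratio_measurable ratio_lower ratio_upper]
        gaussian_smoothing_upper_bound[OF s'(2) ratio_measurable ratio_lower ratio_upper])+
  then have r: "\<bar>r - 1\<bar> \<le> e"
    by linarith
  have q_nonneg: "0 \<le> q"
    unfolding q_def using W_lower[OF s, of y] W_lower[OF s'(1), of y] L by simp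
  have q_upper: "q \<le> U / L"
    unfolding q_def
    by (rule frac_le) (use W_upper[OF s'(1), of y] W_lower[OF s'(1), of y] W_lower[OF s, of y] L in auto)
  have "(sqrt 2 * s)\<^sup>2 = 2 * s\<^sup>2"
    by (simp add: power_mult_distrib)
  then have "\<bar>?W (sqrt 2 * s) y - ?W s y\<bar> \<le> 3 * M / 2 * s\<^sup>2"
    using W_taylor[OF s'(1), of y] W_taylor[OF s, of y] unfolding abs_le_iff by simp
  then have "\<bar>q - 1\<bar> \<le> 3 * M / 2 * s\<^sup>2 / L"
    unfolding q_def using abs_divide_minus_one_le[OF L W_lower[OF s]] L
    by (meson divide_right_mono less_imp_le order_trans)
  then have "\<bar>q - 1\<bar> \<le> 3 * M / (2 * L) * s\<^sup>2"
    by simp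
  then have "\<bar>r * q - 1\<bar> \<le> e * (U / L) + 3 * M / (2 * L) * s\<^sup>2"
    using abs_mult_minus_one_le[OF r q_nonneg q_upper] by blast
  then show ?thesis
    unfolding p2_divide_p1_factorization[OF s w L lower upper] r_def[symmetric] q_def[symmetric] e_def
    by (simp add: algebra_simps)
qed

theorem theorem3:
  fixes \<omega> L U M :: real and w w' w'' :: "real \<Rightarrow> real"
  assumes "\<omega> > 0"
    and "continuous_on UNIV w"
    and "0 < L" and "\<And>x. L \<le> w x" and "\<And>x. w x \<le> U"
    and "\<And>x. (w has_real_derivative w' x) (at x)"
    and "\<And>x. (w' has_real_derivative w'' x) (at x)"
    and "\<And>x. \<bar>w'' x\<bar> \<le> M"
  shows "\<exists>C>0. \<forall>x y \<tau>. \<tau> > 0 \<longrightarrow>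
           \<bar>p2 w (\<omega> * sqrt \<tau>) x y / p1 w (sqrt 2 * (\<omega> * sqrt \<tau>)) x y - 1\<bar> \<le> C * \<tau>"
proof -
  have w: "w \<in> borel_measurable borel"
    using assms(2) by (rule borel_measurable_continuous_onI)
  define D where "D = M / (2 * L) * (U / L) + 3 * M / (2 * L)"
  have "0 \<le> M" "L \<le> U"
    using assms(4,5,8)[of 0] by linarith+
  then have "D \<ge> 0"
    unfolding D_def using assms(3) by simp
  have "\<bar>p2 w (\<omega> * sqrt \<tau>) x y / p1 w (sqrt 2 * (\<omega> * sqrt \<tau>)) x y - 1\<bar> \<le> (\<omega>\<^sup>2 * D + 1) * \<tau>"
    if "\<tau> > 0" for x y \<tau>
  proof -
    have "\<bar>p2 w (\<omega> * sqrt \<tau>) x y / p1 w (sqrt 2 * (\<omega> * sqrt \<tau>)) x y - 1\<bar> \<le> D * (\<omega> * sqrt \<tau>)\<^sup>2"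
      unfolding D_def using assms(1) that
      by (intro p2_divide_p1_deviation[OF _ w assms(3-8)]) simp
    also have "\<dots> \<le> (\<omega>\<^sup>2 * D + 1) * \<tau>"
      using that by (simp add: power_mult_distrib algebra_simps)
    finally show ?thesis .
  qed
  moreover have "\<omega>\<^sup>2 * D + 1 > 0"
    using \<open>D \<ge> 0\<close> by (simp add: add_nonneg_pos)
  ultimately show ?thesis
    by blast
qed

end
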